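(* Consider the semi-discrete scheme $\frac{d}{dt}\mathbf U_{i,j}=-\frac{\mathcal F_{i+\frac12,j}-\mathcal F_{i-\frac12,j}}{\Delta x}-\frac{\mathcal G_{i,j+\frac12}-\mathcal G_{i,j-\frac12}}{\Delta y}+\mathbf S_{i,j}$ with time-independent bottom values $\mathbf B_{i,j}$ and source $\mathbf S_{i,j}$ as in the context. Suppose the numerical fluxes $\mathcal F_{i+\frac12,j},\mathcal G_{i,j+\frac12}\in\mathbb R^{3K}$ satisfy, for all $i,j$, $$[\![\mathbf V]\!]_{i+\frac12,j}^\top\mathcal F_{i+\frac12,j}=[\![\mathbf\Psi]\!]_{i+\frac12,j}+g[\![\mathbf B]\!]_{i+\frac12,j}^\top\mathcal P(\overline{\mathbf h}_{i+\frac12,j})\overline{\mathbf u}_{i+\frac12,j},\quad [\![\mathbf V]\!]_{i,j+\frac12}^\top\mathcal G_{i,j+\frac12}=[\![\mathbf\Phi]\!]_{i,j+\frac12}+g[\![\mathbf B]\!]_{i,j+\frac12}^\top\mathcal P(\overline{\mathbf h}_{i,j+\frac12})\overline{\mathbf v}_{i,j+\frac12}.$$ Then the scheme is energy conservative: $\frac{d}{dt}\mathbf E_{i,j}=-\frac{\mathcal H_{i+\frac12,j}-\mathcal H_{i-\frac12,j}}{\Delta x}-\frac{\mathcal K_{i,j+\frac12}-\mathcal K_{i,j-\frac12}}{\Delta y}$ for all $i,j$, with numerical energy fluxes $$\mathcal H_{i+\frac12,j}=\overline{\mathbf V}_{i+\frac12,j}^\top\mathcal F_{i+\frac12,j}-\overline{\mathbf\Psi}_{i+\frac12,j}-\tfrac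 g4[\![\mathbf B]\!]_{i+\frac12,j}^\top\mathcal P(\overline{\mathbf h}_{i+\frac12,j})[\![\mathbf u]\!]_{i+\frac12,j},$$ $$\mathcal K_{i,j+\frac12}=\overline{\mathbf V}_{i,j+\frac12}^\top\mathcal G_{i,j+\frac12}-\overline{\mathbf\Phi}_{i,j+\frac12}-\tfrac g4[\![\mathbf B]\!]_{i,j+\frac12}^\top\mathcal P(\overline{\mathbf h}_{i,j+\frac12})[\![\mathbf v]\!]_{i,j+\frac12}.$$
   Context: Let $\mathcal M_k\in\mathbb R^{K\times K}$, $(\mathcal M_k)_{l,m}=\int\phi_k\phi_l\phi_m\rho$, where $\phi_1\equiv1,\dots,\phi_K$ are polynomials orthonormal with respect to a probability density $\rho$; $\mathcal P(\widehat z)=\sum_k\widehat z_k\mathcal M_k$; $g>0$. Uniform rectangular grid with cell sizes $\Delta x,\Delta y$; cell values $\mathbf U_{i,j}=(\mathbf h_{i,j},\mathbf q^x_{i,j},\mathbf q^y_{i,j})\in\mathbb R^{3K}$ with $\mathcal P(\mathbf h_{i,j})$ positive definite, bottom $\mathbf B_{i,j}\in\mathbb R^K$; $\mathbf u_{i,j}=\mathcal P^{-1}(\mathbf h_{i,j})\mathbf q^x_{i,j}$, $\mathbf v_{i,j}=\mathcal P^{-1}(\mathbf h_{i,j})\mathbf q^y_{i,j}$. Averages/jumps: $\overline{\mathbf a}_{i+\frac12,j}=\tfrac12(\mathbf a_{i,j}+\mathbf a_{i+1,j})$, $[\![\mathbf a]\!]_{i+\frac12,j}=\mathbf a_{i+1,j}-\mathbf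 a_{i,j}$, analogously in $j$. Source: $\mathbf S_{i,j}=\Big(0;\ -\tfrac{g}{2\Delta x}\big(\mathcal P(\overline{\mathbf h}_{i+\frac12,j})[\![\mathbf B]\!]_{i+\frac12,j}+\mathcal P(\overline{\mathbf h}_{i-\frac12,j})[\![\mathbf B]\!]_{i-\frac12,j}\big);\ -\tfrac{g}{2\Delta y}\big(\mathcal P(\overline{\mathbf h}_{i,j+\frac12})[\![\mathbf B]\!]_{i,j+\frac12}+\mathcal P(\overline{\mathbf h}_{i,j-\frac12})[\![\mathbf B]\!]_{i,j-\frac12}\big)\Big)$. Discrete entropy quantities: $\mathbf E_{i,j}=\tfrac12\big((\mathbf q^x_{i,j})^\top\mathbf u_{i,j}+(\mathbf q^y_{i,j})^\top\mathbf v_{i,j}\big)+\tfrac12 g\|\mathbf h_{i,j}\|^2+g\mathbf h_{i,j}^\top\mathbf B_{i,j}$; $\mathbf V_{i,j}=(\partial\mathbf E_{i,j}/\partial\mathbf U_{i,j})^\top=\big(-\tfrac12\mathcal P(\mathbf u_{i,j})\mathbf u_{i,j}-\tfrac12\mathcal P(\mathbf v_{i,j})\mathbf v_{i,j}+g(\mathbf h_{i,j}+\mathbf B_{i,j});\ \mathbf u_{i,j};\ \mathbf v_{i,j}\big)$; $\mathbf\Psi_{i,j}=\tfrac12 g\,\mathbf u_{i,j}^\top\mathcal P(\mathbf h_{i,j})\mathbf h_{i,j}$; $\mathbf\Phi_{i,j}=\tfrac12 g\,\mathbf v_{i,j}^\top\mathcal P(\mathbf h_{i,j})\mathbf h_{i,j}$.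 *)

theory Defs
  imports "HOL-Analysis.Analysis" "HOL-Computational_Algebra.Polynomial"
begin

definition prob_density :: "(real \<Rightarrow> real) \<Rightarrow> bool" where
  "prob_density \<rho> \<longleftrightarrow> \<rho> \<in> borel_measurable borel \<and> (\<forall>x. 0 \<le> \<rho> x)
     \<and> integrable lborel \<rho> \<and> (LINT x|lborel. \<rho> x) = 1"

definition orthonormal_basis :: "(real \<Rightarrow> real) \<Rightarrow> ('k \<Rightarrow> real poly) \<Rightarrow> 'k \<Rightarrow> bool" where
  "orthonormal_basis \<rho> \<phi> k0 \<longleftrightarrow> \<phi> k0 = 1
     \<and> (\<forall>l m. integrable lborel (\<lambda>x. poly (\<phi> l) x * poly (\<phi> m) x * \<rho> x))
     \<and> (\<forall>k l m. integrable lborel (\<lambda>x. poly (\<phi> k) x * poly (\<phi> l) x * poly (\<phi> m) x * \<rho> x))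
     \<and> (\<forall>l m. (LINT x|lborel. poly (\<phi> l) x * poly (\<phi> m) x * \<rho> x) = (if l = m then 1 else 0))"

definition Mmat :: "(real \<Rightarrow> real) \<Rightarrow> ('k::finite \<Rightarrow> real poly) \<Rightarrow> 'k \<Rightarrow> real^'k^'k" where
  "Mmat \<rho> \<phi> k = (\<chi> l m. LINT x|lborel. poly (\<phi> k) x * poly (\<phi> l) x * poly (\<phi> m) x * \<rho> x)"

definition Pmat :: "(real \<Rightarrow> real) \<Rightarrow> ('k::finite \<Rightarrow> real poly) \<Rightarrow> real^'k \<Rightarrow> real^'k^'k" where
  "Pmat \<rho> \<phi> z = (\<Sum>k\<in>UNIV. (z $ k) *\<^sub>R Mmat \<rho> \<phi> k)"

definition pos_def :: "real^'n^'n \<Rightarrow> bool" where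
  "pos_def A \<longleftrightarrow> (\<forall>x. x \<noteq> 0 \<longrightarrow> 0 < x \<bullet> (A *v x))"

definition vel :: "(real^'k \<Rightarrow> real^'k^'k) \<Rightarrow> real^'k \<Rightarrow> real^'k \<Rightarrow> real^'k" where
  "vel P h q = matrix_inv (P h) *v q"

definition avg :: "'a::real_vector \<Rightarrow> 'a \<Rightarrow> 'a" where
  "avg a b = (1/2) *\<^sub>R (a + b)"

definition energy :: "(real^'k \<Rightarrow> real^'k^'k) \<Rightarrow> real \<Rightarrow> real^'k \<Rightarrow> real^'k \<Rightarrow> real^'k \<Rightarrow> real^'k \<Rightarrow> real" where
  "energy P g h qx qy B =
     (1/2) * (qx \<bullet> vel P h qx + qy \<bullet> vel P h qy) + (1/2) * g * (norm h)\<^sup>2 + g * (h \<bullet> B)"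

text \<open>entropy variables V = (dE/dU)^T\<close>
definition entvar :: "(real^'k \<Rightarrow> real^'k^'k) \<Rightarrow> real \<Rightarrow> real^'k \<Rightarrow> real^'k \<Rightarrow> real^'k \<Rightarrow> real^'k
     \<Rightarrow> (real^'k) \<times> (real^'k) \<times> (real^'k)" where
  "entvar P g h qx qy B =
     (let u = vel P h qx; v = vel P h qy in
      (- (1/2) *\<^sub>R (P u *v u) - (1/2) *\<^sub>R (P v *v v) + g *\<^sub>R (h + B), u, v))"

text \<open>Psi (with q = q^x) and Phi (with q = q^y)\<close>
definition pflux :: "(real^'k \<Rightarrow> real^'k^'k) \<Rightarrow> real \<Rightarrow> real^'k \<Rightarrow> real^'k \<Rightarrow> real" where
  "pflux P g h q = (1/2) * g * (vel P h q \<bullet> (P h *v h))"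

section \<open>Grid-level quantities. Grid fields h, qx, qy, B :: int => int => real^'k (at a fixed time);
  F i j stands for F_{i+1/2,j} and G i j for G_{i,j+1/2}.\<close>

type_synonym 'k field = "int \<Rightarrow> int \<Rightarrow> real^'k"
type_synonym 'k triple = "(real^'k) \<times> (real^'k) \<times> (real^'k)"

definition source :: "(real^'k \<Rightarrow> real^'k^'k) \<Rightarrow> real \<Rightarrow> real \<Rightarrow> real \<Rightarrow> 'k field \<Rightarrow> 'k field
    \<Rightarrow> int \<Rightarrow> int \<Rightarrow> 'k triple" where
  "source P g dx dy h B i j =
    (0,
     - (g / (2 * dx)) *\<^sub>R (P (avg (h i j) (h (i+1) j)) *v (B (i+1) j - B i j)
                         + P (avg (h (i-1) j) (h i j)) *v (B i j - B (i-1) j)),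
     - (g / (2 * dy)) *\<^sub>R (P (avg (h i j) (h i (j+1))) *v (B i (j+1) - B i j)
                         + P (avg (h i (j-1)) (h i j)) *v (B i j - B i (j-1))))"

definition flux_cond_x :: "(real^'k \<Rightarrow> real^'k^'k) \<Rightarrow> real \<Rightarrow> 'k field \<Rightarrow> 'k field \<Rightarrow> 'k field
    \<Rightarrow> 'k field \<Rightarrow> 'k triple \<Rightarrow> int \<Rightarrow> int \<Rightarrow> bool" where
  "flux_cond_x P g h qx qy B Fx i j \<longleftrightarrow>
     (entvar P g (h (i+1) j) (qx (i+1) j) (qy (i+1) j) (B (i+1) j)
        - entvar P g (h i j) (qx i j) (qy i j) (B i j)) \<bullet> Fx
     = pflux P g (h (i+1) j) (qx (i+1) j) - pflux P g (h i j) (qx i j)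
       + g * ((B (i+1) j - B i j) \<bullet> (P (avg (h i j) (h (i+1) j))
                *v avg (vel P (h i j) (qx i j)) (vel P (h (i+1) j) (qx (i+1) j))))"

definition flux_cond_y :: "(real^'k \<Rightarrow> real^'k^'k) \<Rightarrow> real \<Rightarrow> 'k field \<Rightarrow> 'k field \<Rightarrow> 'k field
    \<Rightarrow> 'k field \<Rightarrow> 'k triple \<Rightarrow> int \<Rightarrow> int \<Rightarrow> bool" where
  "flux_cond_y P g h qx qy B Gy i j \<longleftrightarrow>
     (entvar P g (h i (j+1)) (qx i (j+1)) (qy i (j+1)) (B i (j+1))
        - entvar P g (h i j) (qx i j) (qy i j) (B i j)) \<bullet> Gy
     = pflux P g (h i (j+1)) (qy i (j+1)) - pflux P g (h i j) (qy i j)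
       + g * ((B i (j+1) - B i j) \<bullet> (P (avg (h i j) (h i (j+1)))
                *v avg (vel P (h i j) (qy i j)) (vel P (h i (j+1)) (qy i (j+1)))))"

definition Hflux :: "(real^'k \<Rightarrow> real^'k^'k) \<Rightarrow> real \<Rightarrow> 'k field \<Rightarrow> 'k field \<Rightarrow> 'k field
    \<Rightarrow> 'k field \<Rightarrow> 'k triple \<Rightarrow> int \<Rightarrow> int \<Rightarrow> real" where
  "Hflux P g h qx qy B Fx i j =
     avg (entvar P g (h i j) (qx i j) (qy i j) (B i j))
         (entvar P g (h (i+1) j) (qx (i+1) j) (qy (i+1) j) (B (i+1) j)) \<bullet> Fx
     - avg (pflux P g (h i j) (qx i j)) (pflux P g (h (i+1) j) (qx (i+1) j))
     - (g / 4) * ((B (i+1) j - B i j) \<bullet> (P (avg (h i j) (h (i+1) j))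
                *v (vel P (h (i+1) j) (qx (i+1) j) - vel P (h i j) (qx i j))))"

definition Kflux :: "(real^'k \<Rightarrow> real^'k^'k) \<Rightarrow> real \<Rightarrow> 'k field \<Rightarrow> 'k field \<Rightarrow> 'k field
    \<Rightarrow> 'k field \<Rightarrow> 'k triple \<Rightarrow> int \<Rightarrow> int \<Rightarrow> real" where
  "Kflux P g h qx qy B Gy i j =
     avg (entvar P g (h i j) (qx i j) (qy i j) (B i j))
         (entvar P g (h i (j+1)) (qx i (j+1)) (qy i (j+1)) (B i (j+1))) \<bullet> Gy
     - avg (pflux P g (h i j) (qy i j)) (pflux P g (h i (j+1)) (qy i (j+1)))
     - (g / 4) * ((B i (j+1) - B i j) \<bullet> (P (avg (h i j) (h i (j+1)))
                *v (vel P (h i (j+1)) (qy i (j+1)) - vel P (h i j) (qy i j))))"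

end

theory Submission
  imports Defs
begin

(* The triple-product tensor (M_k)_{l,m} is fully symmetric, so P(z) is a symmetric matrix and
   a . P(z) c = z . P(a) c.  Differentiating q . u with u = P(h)^{-1} q therefore gives
   2 u . dq - dh . P(u) u, which shows that V is indeed the gradient of E: dE/dt = V . dU/dt.
   At an interface, the entropy flux condition lets one write H_{i+1/2} in two ways, through the
   left or through the right cell:
     H_{i+1/2} = V_i . F - Psi_i + g/2 [[B]] . P(avg h) u_i
             = V_{i+1} . F - Psi_{i+1} - g/2 [[B]] . P(avg h) u_{i+1}.
   Using the first form at i+1/2 and the second at i-1/2, the difference H_{i+1/2} - H_{i-1/2}
   is V_i . (F_{i+1/2} - F_{i-1/2}) plus bottom terms which, P being symmetric, are exactly
   -dx times the x-part of V_i . S_i; likewise in y. *)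

lemma Mmat_commute_first: "Mmat \<rho> \<phi> k $ l $ m = Mmat \<rho> \<phi> l $ k $ m"
  by (simp add: Mmat_def ac_simps)

lemma Mmat_commute_last: "Mmat \<rho> \<phi> k $ l $ m = Mmat \<rho> \<phi> k $ m $ l"
  by (simp add: Mmat_def ac_simps)

lemma inner_Pmat_expand:
  "a \<bullet> (Pmat \<rho> \<phi> z *v c) =
     (\<Sum>l\<in>UNIV. \<Sum>m\<in>UNIV. \<Sum>k\<in>UNIV. z$k * a$l * c$m * Mmat \<rho> \<phi> k $ l $ m)"
  by (simp add: Pmat_def inner_vec_def matrix_vector_mult_def sum_distrib_left sum_distrib_right ac_simps)

lemma inner_Pmat_commute: "a \<bullet> (Pmat \<rho> \<phi> z *v c) = c \<bullet> (Pmat \<rho> \<phi> z *v a)"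
proof -
  have "c \<bullet> (Pmat \<rho> \<phi> z *v a) =
      (\<Sum>l\<in>UNIV. \<Sum>m\<in>UNIV. \<Sum>k\<in>UNIV. z$k * a$m * c$l * Mmat \<rho> \<phi> k $ m $ l)"
    unfolding inner_Pmat_expand
    by (intro sum.cong refl) (subst Mmat_commute_last, simp add: ac_simps)
  also have "\<dots> = a \<bullet> (Pmat \<rho> \<phi> z *v c)"
    unfolding inner_Pmat_expand by (rule sum.swap)
  finally show ?thesis ..
qed

lemma inner_Pmat_swap: "a \<bullet> (Pmat \<rho> \<phi> z *v c) = z \<bullet> (Pmat \<rho> \<phi> a *v c)"
proof -
  have "z \<bullet> (Pmat \<rho> \<phi> a *v c) =
      (\<Sum>k\<in>UNIV. \<Sum>m\<in>UNIV. \<Sum>l\<in>UNIV. z$k * a$l * c$m * Mmat \<rho> \<phi> k $ l $ m)"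
    unfolding inner_Pmat_expand
    by (intro sum.cong refl) (subst Mmat_commute_first, simp add: ac_simps)
  also have "\<dots> = (\<Sum>k\<in>UNIV. \<Sum>l\<in>UNIV. \<Sum>m\<in>UNIV. z$k * a$l * c$m * Mmat \<rho> \<phi> k $ l $ m)"
    by (rule sum.cong[OF refl]) (rule sum.swap)
  also have "\<dots> = (\<Sum>l\<in>UNIV. \<Sum>k\<in>UNIV. \<Sum>m\<in>UNIV. z$k * a$l * c$m * Mmat \<rho> \<phi> k $ l $ m)"
    by (rule sum.swap)
  also have "\<dots> = a \<bullet> (Pmat \<rho> \<phi> z *v c)"
    unfolding inner_Pmat_expand by (rule sum.cong[OF refl]) (rule sum.swap)
  finally show ?thesis ..
qed

lemma linear_Pmat: "linear (Pmat \<rho> \<phi>)"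
  by (rule linearI) (simp_all add: Pmat_def scaleR_add_left sum.distrib scaleR_sum_right)

lemma bounded_bilinear_Pmat_mult: "bounded_bilinear (\<lambda>z w. Pmat \<rho> \<phi> z *v (w::real^'k::finite))"
  unfolding bilinear_conv_bounded_bilinear[symmetric] bilinear_def
proof (intro conjI allI)
  show "linear (\<lambda>x. Pmat \<rho> \<phi> x *v y)" for y :: "real^'k"
    by (rule linearI)
      (simp add: linear_add[OF linear_Pmat] matrix_vector_mult_add_rdistrib,
       simp add: linear_scale[OF linear_Pmat] vec_eq_iff matrix_vector_mult_def sum_distrib_left ac_simps)
qed (simp add: matrix_vector_mul_linear)

lemma pos_def_invertible:
  fixes A :: "real^'n^'n"
  assumes "pos_def A"
  shows "invertible A"
proof -
  have "inj ((*v) A)"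
  proof (rule injI)
    fix x y assume "A *v x = A *v y"
    then have "(x - y) \<bullet> (A *v (x - y)) = 0" by (simp add: matrix_vector_mult_diff_distrib)
    then show "x = y" using assms unfolding pos_def_def by (metis less_irrefl right_minus_eq)
  qed
  then show ?thesis
    using matrix_left_invertible_injective invertible_left_inverse by blast
qed

lemma matrix_inv_right:
  fixes A :: "'a::field^'n^'n"
  assumes "invertible A"
  shows "A ** matrix_inv A = mat 1"
  using assms unfolding invertible_def matrix_inv_def by (rule someI_ex[THEN conjunct1])

lemma matrix_vector_mul_matrix_inv:
  fixes A :: "'a::field^'n^'n"
  assumes "invertible A"
  shows "A *v (matrix_inv A *v q) = q"
  by (simp add: matrix_vector_mul_assoc matrix_inv_right[OF assms])

lemma differentiable_prod:
  fixes f :: "'i \<Rightarrow> real \<Rightarrow> real"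
  assumes "\<And>i. i \<in> I \<Longrightarrow> f i differentiable (at t)"
  shows "(\<lambda>s. \<Prod>i\<in>I. f i s) differentiable (at t)"
  using assms by (induction I rule: infinite_finite_induct) auto

lemma differentiable_det:
  fixes A :: "real \<Rightarrow> real^'n^'n"
  assumes "\<And>i j. (\<lambda>s. A s $ i $ j) differentiable (at t)"
  shows "(\<lambda>s. det (A s)) differentiable (at t)"
  unfolding det_def
  by (intro differentiable_sum ballI differentiable_mult differentiable_const differentiable_prod assms)
    simp

lemma differentiable_cart_componentwise:
  fixes f :: "real \<Rightarrow> real^'n"
  shows "f differentiable (at t) \<longleftrightarrow> (\<forall>i. (\<lambda>s. f s $ i) differentiable (at t))"
proof -
  have "(\<forall>b\<in>Basis. P b) \<longleftrightarrow> (\<forall>i. P (axis i 1))" for P :: "real^'n \<Rightarrow> bool"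
    by (simp add: Basis_vec_def)
  from this[of "\<lambda>b. (\<lambda>s. f s \<bullet> b) differentiable (at t)"] show ?thesis
    by (simp add: differentiable_componentwise_within[of f t UNIV] inner_axis)
qed

lemma differentiable_matrix_inv_mult:
  fixes A :: "real \<Rightarrow> real^'n^'n" and q :: "real \<Rightarrow> real^'n"
  assumes inv: "\<And>s. invertible (A s)"
    and dA: "\<And>i j. (\<lambda>s. A s $ i $ j) differentiable (at t)"
    and dq: "\<And>i. (\<lambda>s. q s $ i) differentiable (at t)"
  shows "(\<lambda>s. matrix_inv (A s) *v q s) differentiable (at t)"
proof -
  have det: "det (A s) \<noteq> 0" for s
    using inv invertible_det_nz by blast
  have "matrix_inv (A s) *v q s = (\<chi> k. det (\<chi> i j. if j = k then q s $ i else A s $ i $ j) / det (A s))"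
    for s
    using cramer[OF det] matrix_vector_mul_matrix_inv[OF inv] by blast
  moreover have "(\<lambda>s. if j = k then q s $ i else A s $ i $ j) differentiable (at t)" for k i j
    by (cases "j = k") (simp_all add: dA dq)
  then have "(\<lambda>s. \<chi> k. det (\<chi> i j. if j = k then q s $ i else A s $ i $ j) / det (A s))
      differentiable (at t)"
    by (subst differentiable_cart_componentwise)
      (simp add: differentiable_divide differentiable_det det dA)
  ultimately show ?thesis by simp
qed

lemma differentiable_Pmat_entry:
  fixes h :: "real \<Rightarrow> real^'k::finite"
  assumes "h differentiable (at t)"
  shows "(\<lambda>s. Pmat \<rho> \<phi> (h s) $ i $ j) differentiable (at t)"
  using assms unfolding differentiable_cart_componentwise[of h]
  by (simp add: Pmat_def)

lemma has_vector_derivative_vel_Pmat: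
  fixes h q :: "real \<Rightarrow> real^'k::finite"
  assumes pd: "\<And>s. pos_def (Pmat \<rho> \<phi> (h s))"
    and dh: "(h has_vector_derivative h') (at t)" and dq: "(q has_vector_derivative q') (at t)"
  obtains u' where "((\<lambda>s. vel (Pmat \<rho> \<phi>) (h s) (q s)) has_vector_derivative u') (at t)"
    and "Pmat \<rho> \<phi> (h t) *v u' = q' - Pmat \<rho> \<phi> h' *v vel (Pmat \<rho> \<phi>) (h t) (q t)"
proof -
  let ?A = "\<lambda>s. Pmat \<rho> \<phi> (h s)"
  let ?u = "\<lambda>s. vel (Pmat \<rho> \<phi>) (h s) (q s)"
  have inv: "invertible (?A s)" for s
    using pd pos_def_invertible by blast
  have "h differentiable (at t)" "q differentiable (at t)"
    using dh dq differentiableI_vector by blast+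
  then have "?u differentiable (at t)"
    unfolding vel_def differentiable_cart_componentwise[of q]
    by (intro differentiable_matrix_inv_mult inv differentiable_Pmat_entry) simp_all
  then have du: "(?u has_vector_derivative vector_derivative ?u (at t)) (at t)"
    using vector_derivative_works by blast
  have "((\<lambda>s. ?A s *v ?u s) has_vector_derivative
      ?A t *v vector_derivative ?u (at t) + Pmat \<rho> \<phi> h' *v ?u t) (at t)"
    using bounded_bilinear.has_vector_derivative[OF bounded_bilinear_Pmat_mult dh du] by simp
  moreover have "?A s *v ?u s = q s" for s
    unfolding vel_def by (rule matrix_vector_mul_matrix_inv[OF inv])
  ultimately have "(q has_vector_derivative
      ?A t *v vector_derivative ?u (at t) + Pmat \<rho> \<phi> h' *v ?u t) (at t)"
    by simp
  then have "?A t *v vector_derivative ?u (at t) + Pmat \<rho> \<phi> h' *v ?u t = q'"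
    using dq by (rule vector_derivative_unique_at)
  then show ?thesis
    using that du by (simp add: algebra_simps)
qed

lemma has_real_derivative_inner:
  fixes f g :: "real \<Rightarrow> 'a::real_inner"
  assumes "(f has_vector_derivative f') (at t)" "(g has_vector_derivative g') (at t)"
  shows "((\<lambda>s. f s \<bullet> g s) has_real_derivative f t \<bullet> g' + f' \<bullet> g t) (at t)"
  using bounded_bilinear.has_vector_derivative[OF bounded_bilinear_inner assms]
  by (simp add: has_real_derivative_iff_has_vector_derivative)

lemma has_real_derivative_kinetic:
  fixes h q :: "real \<Rightarrow> real^'k::finite"
  assumes pd: "\<And>s. pos_def (Pmat \<rho> \<phi> (h s))"
    and dh: "(h has_vector_derivative h') (at t)" and dq: "(q has_vector_derivative q') (at t)"
  defines "u \<equiv> vel (Pmat \<rho> \<phi>) (h t) (q t)"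
  shows "((\<lambda>s. q s \<bullet> vel (Pmat \<rho> \<phi>) (h s) (q s)) has_real_derivative
     2 * (u \<bullet> q') - h' \<bullet> (Pmat \<rho> \<phi> u *v u)) (at t)"
proof -
  obtain u' where du: "((\<lambda>s. vel (Pmat \<rho> \<phi>) (h s) (q s)) has_vector_derivative u') (at t)"
    and u': "Pmat \<rho> \<phi> (h t) *v u' = q' - Pmat \<rho> \<phi> h' *v u"
    using has_vector_derivative_vel_Pmat[OF pd dh dq] unfolding u_def by blast
  have "q t = Pmat \<rho> \<phi> (h t) *v u"
    unfolding u_def vel_def using matrix_vector_mul_matrix_inv pd pos_def_invertible by metis
  then have "q t \<bullet> u' = u' \<bullet> (Pmat \<rho> \<phi> (h t) *v u)"
    by (simp only: inner_commute)
  also have "\<dots> = u \<bullet> (Pmat \<rho> \<phi> (h t) *v u')"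
    by (rule inner_Pmat_commute)
  also have "\<dots> = u \<bullet> q' - h' \<bullet> (Pmat \<rho> \<phi> u *v u)"
    unfolding u' inner_diff_right by (simp add: inner_Pmat_swap[where a=u and z=h'])
  finally show ?thesis
    using has_real_derivative_inner[OF dq du] by (simp add: inner_commute[of q'] u_def)
qed

lemma has_real_derivative_energy:
  fixes h qx qy :: "real \<Rightarrow> real^'k::finite"
  assumes pd: "\<And>s. pos_def (Pmat \<rho> \<phi> (h s))"
    and dU: "((\<lambda>s. (h s, qx s, qy s)) has_vector_derivative D) (at t)"
  shows "((\<lambda>s. energy (Pmat \<rho> \<phi>) g (h s) (qx s) (qy s) B) has_real_derivative
     entvar (Pmat \<rho> \<phi>) g (h t) (qx t) (qy t) B \<bullet> D) (at t)"
proof -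
  obtain h' qx' qy' where D: "D = (h', qx', qy')"
    by (cases D) auto
  have dq: "((\<lambda>s. (qx s, qy s)) has_vector_derivative (qx', qy')) (at t)"
    using bounded_linear.has_vector_derivative[OF bounded_linear_snd dU] by (simp add: D)
  have dh: "(h has_vector_derivative h') (at t)"
    using bounded_linear.has_vector_derivative[OF bounded_linear_fst dU] by (simp add: D)
  have dqx: "(qx has_vector_derivative qx') (at t)"
    using bounded_linear.has_vector_derivative[OF bounded_linear_fst dq] by simp
  have dqy: "(qy has_vector_derivative qy') (at t)"
    using bounded_linear.has_vector_derivative[OF bounded_linear_snd dq] by simp
  let ?P = "Pmat \<rho> \<phi>"
  let ?u = "vel ?P (h t) (qx t)" and ?v = "vel ?P (h t) (qy t)"
  have "(\<lambda>s. energy ?P g (h s) (qx s) (qy s) B) =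
     (\<lambda>s. 1/2 * (qx s \<bullet> vel ?P (h s) (qx s) + qy s \<bullet> vel ?P (h s) (qy s))
        + 1/2 * g * (h s \<bullet> h s) + g * (h s \<bullet> B))" (is "_ = ?E")
    by (simp add: energy_def power2_norm_eq_inner)
  moreover have "(?E has_real_derivative
     1/2 * ((2 * (?u \<bullet> qx') - h' \<bullet> (?P ?u *v ?u)) + (2 * (?v \<bullet> qy') - h' \<bullet> (?P ?v *v ?v)))
     + 1/2 * g * (h t \<bullet> h' + h' \<bullet> h t) + g * (h t \<bullet> 0 + h' \<bullet> B)) (at t)"
    by (intro DERIV_add DERIV_cmult has_real_derivative_kinetic pd dh dqx dqy
        has_real_derivative_inner has_vector_derivative_const)
  ultimately show ?thesis
    by (simp add: D entvar_def Let_def inner_add_left inner_diff_left inner_commute[of h']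
        algebra_simps)
qed

lemma
  fixes VL VR F :: "'a::real_inner" and A :: "real^'n^'m"
  assumes "(VR - VL) \<bullet> F = \<Psi>R - \<Psi>L + g * (b \<bullet> (A *v avg uL uR))"
  shows energy_flux_interface_left:
      "avg VL VR \<bullet> F - avg \<Psi>L \<Psi>R - g / 4 * (b \<bullet> (A *v (uR - uL)))
         = VL \<bullet> F - \<Psi>L + g / 2 * (b \<bullet> (A *v uL))"
    and energy_flux_interface_right:
      "avg VL VR \<bullet> F - avg \<Psi>L \<Psi>R - g / 4 * (b \<bullet> (A *v (uR - uL)))
         = VR \<bullet> F - \<Psi>R - g / 2 * (b \<bullet> (A *v uR))"
  using assms
  by (simp_all add: avg_def inner_add_left inner_diff_left inner_add_right inner_diff_right
      matrix_vector_right_distrib matrix_vector_mult_diff_distrib matrix_vector_mult_scaleR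
      field_simps)

lemma Hflux_eq_left:
  assumes "flux_cond_x P g h qx qy B F i j"
  shows "Hflux P g h qx qy B F i j
    = entvar P g (h i j) (qx i j) (qy i j) (B i j) \<bullet> F - pflux P g (h i j) (qx i j)
      + g / 2 * ((B (i+1) j - B i j) \<bullet> (P (avg (h i j) (h (i+1) j)) *v vel P (h i j) (qx i j)))"
  using assms unfolding Hflux_def flux_cond_x_def by (rule energy_flux_interface_left)

lemma Hflux_eq_right:
  assumes "flux_cond_x P g h qx qy B F (i-1) j"
  shows "Hflux P g h qx qy B F (i-1) j
    = entvar P g (h i j) (qx i j) (qy i j) (B i j) \<bullet> F - pflux P g (h i j) (qx i j)
      - g / 2 * ((B i j - B (i-1) j) \<bullet> (P (avg (h (i-1) j) (h i j)) *v vel P (h i j) (qx i j)))"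
  using assms unfolding Hflux_def flux_cond_x_def
  by (simp only: diff_add_cancel) (rule energy_flux_interface_right)

lemma Kflux_eq_left:
  assumes "flux_cond_y P g h qx qy B G i j"
  shows "Kflux P g h qx qy B G i j
    = entvar P g (h i j) (qx i j) (qy i j) (B i j) \<bullet> G - pflux P g (h i j) (qy i j)
      + g / 2 * ((B i (j+1) - B i j) \<bullet> (P (avg (h i j) (h i (j+1))) *v vel P (h i j) (qy i j)))"
  using assms unfolding Kflux_def flux_cond_y_def by (rule energy_flux_interface_left)

lemma Kflux_eq_right:
  assumes "flux_cond_y P g h qx qy B G i (j-1)"
  shows "Kflux P g h qx qy B G i (j-1)
    = entvar P g (h i j) (qx i j) (qy i j) (B i j) \<bullet> G - pflux P g (h i j) (qy i j)
      - g / 2 * ((B i j - B i (j-1)) \<bullet> (P (avg (h i (j-1)) (h i j)) *v vel P (h i j) (qy i j)))"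
  using assms unfolding Kflux_def flux_cond_y_def
  by (simp only: diff_add_cancel) (rule energy_flux_interface_right)

lemma entvar_inner_scheme_rhs:
  fixes P :: "real^'k::finite \<Rightarrow> real^'k^'k"
  assumes P_sym: "\<And>z a c. a \<bullet> (P z *v c) = c \<bullet> (P z *v a)"
    and dx: "dx \<noteq> 0" and dy: "dy \<noteq> 0"
    and F: "flux_cond_x P g h qx qy B F i j" and F': "flux_cond_x P g h qx qy B F' (i-1) j"
    and G: "flux_cond_y P g h qx qy B G i j" and G': "flux_cond_y P g h qx qy B G' i (j-1)"
  shows "entvar P g (h i j) (qx i j) (qy i j) (B i j)
      \<bullet> (- (1/dx) *\<^sub>R (F - F') - (1/dy) *\<^sub>R (G - G') + source P g dx dy h B i j)
    = - (Hflux P g h qx qy B F i j - Hflux P g h qx qy B F' (i-1) j) / dx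
      - (Kflux P g h qx qy B G i j - Kflux P g h qx qy B G' i (j-1)) / dy"
proof -
  define u where "u = vel P (h i j) (qx i j)"
  define v where "v = vel P (h i j) (qy i j)"
  obtain a where V: "entvar P g (h i j) (qx i j) (qy i j) (B i j) = (a, u, v)"
    by (simp add: entvar_def u_def v_def Let_def)
  show ?thesis
    unfolding Hflux_eq_left[OF F] Hflux_eq_right[OF F'] Kflux_eq_left[OF G] Kflux_eq_right[OF G']
      source_def V u_def[symmetric] v_def[symmetric]
    using dx dy
    by (simp add: inner_add_right inner_diff_right inner_add_left inner_diff_left P_sym[of u] P_sym[of v]
        field_simps)
qed

theorem lemma4p4:
  fixes \<rho> :: "real \<Rightarrow> real" and \<phi> :: "'k::finite \<Rightarrow> real poly" and k0 :: 'k
    and g dx dy :: real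
    and h qx qy :: "int \<Rightarrow> int \<Rightarrow> real \<Rightarrow> real^'k"
    and B :: "int \<Rightarrow> int \<Rightarrow> real^'k"
    and F G :: "int \<Rightarrow> int \<Rightarrow> real \<Rightarrow> (real^'k) \<times> (real^'k) \<times> (real^'k)"
  assumes rho: "prob_density \<rho>"
    and phi: "orthonormal_basis \<rho> \<phi> k0"
    and g: "g > 0" and dx: "dx > 0" and dy: "dy > 0"
    and posdef: "\<And>i j t. pos_def (Pmat \<rho> \<phi> (h i j t))"
    and scheme: "\<And>i j t. ((\<lambda>s. (h i j s, qx i j s, qy i j s)) has_vector_derivative
         (- (1/dx) *\<^sub>R (F i j t - F (i-1) j t) - (1/dy) *\<^sub>R (G i j t - G i (j-1) t)
          + source (Pmat \<rho> \<phi>) g dx dy (\<lambda>i j. h i j t) B i j)) (at t)"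
    and fluxF: "\<And>i j t. flux_cond_x (Pmat \<rho> \<phi>) g (\<lambda>i j. h i j t) (\<lambda>i j. qx i j t)
         (\<lambda>i j. qy i j t) B (F i j t) i j"
    and fluxG: "\<And>i j t. flux_cond_y (Pmat \<rho> \<phi>) g (\<lambda>i j. h i j t) (\<lambda>i j. qx i j t)
         (\<lambda>i j. qy i j t) B (G i j t) i j"
  shows "((\<lambda>s. energy (Pmat \<rho> \<phi>) g (h i j s) (qx i j s) (qy i j s) (B i j)) has_real_derivative
      (- (Hflux (Pmat \<rho> \<phi>) g (\<lambda>i j. h i j t) (\<lambda>i j. qx i j t) (\<lambda>i j. qy i j t) B (F i j t) i j
          - Hflux (Pmat \<rho> \<phi>) g (\<lambda>i j. h i j t) (\<lambda>i j. qx i j t) (\<lambda>i j. qy i j t) B (F (i-1) j t) (i-1) j) / dx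
       - (Kflux (Pmat \<rho> \<phi>) g (\<lambda>i j. h i j t) (\<lambda>i j. qx i j t) (\<lambda>i j. qy i j t) B (G i j t) i j
          - Kflux (Pmat \<rho> \<phi>) g (\<lambda>i j. h i j t) (\<lambda>i j. qx i j t) (\<lambda>i j. qy i j t) B (G i (j-1) t) i (j-1)) / dy))
    (at t)"
proof -
  have "dx \<noteq> 0" "dy \<noteq> 0"
    using dx dy by auto
  from entvar_inner_scheme_rhs[OF inner_Pmat_commute this fluxF[where i=i and j=j and t=t]
      fluxF[where i="i-1" and j=j and t=t] fluxG[where i=i and j=j and t=t]
      fluxG[where i=i and j="j-1" and t=t]]
  show ?thesis
    using has_real_derivative_energy[OF posdef scheme[where i=i and j=j and t=t], where g=g and B="B i j"]
    by simp
qed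

end
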